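(* Let $G$ be a digraph and $f$ a discrete Morse function on $G$. Then $\mathcal M(G,f)$ is an acyclic matching: there is no cycle $$\alpha_1<\beta_1>\alpha_2<\beta_2>\alpha_3<\cdots>\alpha_k<\beta_k>\alpha_1$$ with $k\ge2$, where all $\beta_i$ are distinct, $(\alpha_i,\beta_i)\in\mathcal M(G,f)$ for $1\le i\le k$, and the $\alpha_i$ are allowed elementary $n$-paths and the $\beta_i$ allowed elementary $(n+1)$-paths for some $n\ge0$.
   Context: A digraph $G=(V,E)$ consists of a set $V$ and $E\subseteq(V\times V)\setminus\{(v,v)\}$; $(u,v)\in E$ is written $u\to v$. An allowed elementary $n$-path is a sequence $v_0\cdots v_n$ of vertices with $v_{i-1}\to v_i\in E$ for $1\le i\le n$. For allowed elementary paths, $\gamma'<\gamma$ (or $\gamma>\gamma'$) means $\gamma'$ is obtained from $\gamma$ by deleting some entries. A map $f:V\to[0,+\infty)$ is a discrete Morse function on $G$ if for every allowed elementary path $v_0\cdots v_n$: (i) there is at most one index $i$ with $f(v_i)=0$ such that $v_0\cdots v_{i-1}v_{i+1}\cdots v_n$ is an allowed elementary $(n-1)$-path; (ii) there is at most one vertex $u$ with $f(u)=0$ such that for some $-1\le j\le n$ the sequence $v_0\cdots v_juv_{j+1}\cdots v_n$ (meaning $uv_0\cdots v_n$ if $j=-1$, $v_0\cdots v_nu$ if $j=n$) is an allowed elementary $(n+1)$-path. Set $f(v_0\cdots v_n)=\sum_if(v_i)$. $\mathcal M(G,f)$ is the set of pairs $(\alpha,\beta)$ with $\alpha$ an allowed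 elementary $n$-path, $\beta$ an allowed elementary $(n+1)$-path for some $n\ge0$, $\alpha<\beta$ and $f(\alpha)=f(\beta)$. *)

theory Defs
  imports Complex_Main "HOL-Library.Sublist"
begin

definition digraph :: "'v set \<Rightarrow> ('v \<times> 'v) set \<Rightarrow> bool" where
  "digraph V E \<longleftrightarrow> E \<subseteq> (V \<times> V) - {(v, v) | v. True}"

definition allowed_path :: "'v set \<Rightarrow> ('v \<times> 'v) set \<Rightarrow> nat \<Rightarrow> 'v list \<Rightarrow> bool" where
  "allowed_path V E n p \<longleftrightarrow> length p = Suc n \<and> set p \<subseteq> V \<and>
     (\<forall>i<n. (p ! i, p ! Suc i) \<in> E)"

definition any_allowed_path :: "'v set \<Rightarrow> ('v \<times> 'v) set \<Rightarrow> 'v list \<Rightarrow> bool" where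
  "any_allowed_path V E p \<longleftrightarrow> (\<exists>n. allowed_path V E n p)"

definition del_at :: "nat \<Rightarrow> 'v list \<Rightarrow> 'v list" where
  "del_at i p = take i p @ drop (Suc i) p"

definition ins_at :: "nat \<Rightarrow> 'v \<Rightarrow> 'v list \<Rightarrow> 'v list" where
  "ins_at j u p = take j p @ u # drop j p"

definition discrete_morse :: "'v set \<Rightarrow> ('v \<times> 'v) set \<Rightarrow> ('v \<Rightarrow> real) \<Rightarrow> bool" where
  "discrete_morse V E f \<longleftrightarrow> (\<forall>v\<in>V. f v \<ge> 0) \<and>
    (\<forall>n p. allowed_path V E n p \<longrightarrow>
       (\<forall>i i'. i \<le> n \<and> f (p ! i) = 0 \<and> n \<ge> 1 \<and> allowed_path V E (n - 1) (del_at i p) \<and>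
               i' \<le> n \<and> f (p ! i') = 0 \<and> allowed_path V E (n - 1) (del_at i' p) \<longrightarrow> i = i') \<and>
       (\<forall>u u'. f u = 0 \<and> (\<exists>j\<le>Suc n. allowed_path V E (Suc n) (ins_at j u p)) \<and>
               f u' = 0 \<and> (\<exists>j\<le>Suc n. allowed_path V E (Suc n) (ins_at j u' p)) \<longrightarrow> u = u'))"

definition path_val :: "('v \<Rightarrow> real) \<Rightarrow> 'v list \<Rightarrow> real" where
  "path_val f p = sum_list (map f p)"

definition morse_pairs :: "'v set \<Rightarrow> ('v \<times> 'v) set \<Rightarrow> ('v \<Rightarrow> real) \<Rightarrow> ('v list \<times> 'v list) set" where
  "morse_pairs V E f = {(a, b). \<exists>n. allowed_path V E n a \<and> allowed_path V E (Suc n) b \<and>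
      subseq a b \<and> a \<noteq> b \<and> path_val f a = path_val f b}"

end

theory Submission imports Defs begin

text \<open>
  Along the cycle the weights \<open>f(\<alpha>\<^sub>i)\<close> cannot increase: \<open>\<alpha>\<^sub>i\<^sub>+\<^sub>1\<close> is a face of \<open>\<beta>\<^sub>i\<close>, \<open>f \<ge> 0\<close>
  and \<open>f(\<beta>\<^sub>i) = f(\<alpha>\<^sub>i)\<close>. Being cyclic, they are constant, so \<open>(\<alpha>\<^sub>2, \<beta>\<^sub>1)\<close> is a matched pair
  as well. Condition (i) of a discrete Morse function says that a path has at most one face
  obtained by deleting a zero-weight vertex, whence \<open>\<alpha>\<^sub>2 = \<alpha>\<^sub>1\<close>. Condition (ii) fixes the
  zero-weight vertex that can be inserted into \<open>\<alpha>\<^sub>1\<close>, and it cannot be inserted at two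
  different positions, since inserting it at both would give a path with two deletable
  zero-weight vertices, contradicting (i). Hence \<open>\<beta>\<^sub>2 = \<beta>\<^sub>1\<close>, contradicting distinctness.
\<close>

lemma allowed_path_iff_successively:
  "allowed_path V E n p \<longleftrightarrow>
     length p = Suc n \<and> set p \<subseteq> V \<and> successively (\<lambda>x y. (x, y) \<in> E) p"
  unfolding allowed_path_def successively_conv_nth by auto

lemma subseq_length_Suc_obtains_del_at:
  assumes "subseq a b" and "length b = Suc (length a)"
  obtains j where "j < length b" and "a = del_at j b"
proof -
  from assms have "\<exists>j<length b. a = del_at j b"
  proof (induction rule: list_emb.induct)
    case (list_emb_Nil ys)
    then show ?case by (auto simp: del_at_def length_Suc_conv)
  next
    case (list_emb_Cons xs ys y)
    then have "xs = ys"
      by (metis Suc_inject le_SucE length_Cons list_emb_length not_subseq_length subseq_same_length)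
    then show ?case by (auto simp: del_at_def intro: exI[of _ 0])
  next
    case (list_emb_Cons2 x y xs ys)
    then obtain j where "j < length ys" "xs = del_at j ys" by auto
    with list_emb_Cons2 show ?case by (auto simp: del_at_def intro!: exI[of _ "Suc j"])
  qed
  with that show thesis by blast
qed

lemma length_ins_at [simp]: "length (ins_at j u p) = Suc (length p)"
  by (simp add: ins_at_def)

lemma ins_at_nth_del_at: "j < length p \<Longrightarrow> ins_at j (p ! j) (del_at j p) = p"
  by (simp add: ins_at_def del_at_def Cons_nth_drop_Suc)

lemma del_at_ins_at: "j \<le> length p \<Longrightarrow> del_at j (ins_at j u p) = p"
  by (simp add: ins_at_def del_at_def)

lemma nth_ins_at: "j \<le> length p \<Longrightarrow> ins_at j u p ! j = u"
  by (simp add: ins_at_def nth_append)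

lemma ins_at_ins_at_swap:
  assumes "j \<le> j'" and "j' \<le> length p"
  shows "ins_at j u (ins_at j' v p) = ins_at (Suc j') v (ins_at j u p)"
proof -
  have "drop j (take j' p) @ v # drop j' p = take (j' - j) (drop j p) @ v # drop (j' - j) (drop j p)"
    using assms by (simp add: drop_take)
  with assms show ?thesis by (simp add: ins_at_def min_def Suc_diff_le)
qed

lemma path_val_del_at: "j < length p \<Longrightarrow> path_val f p = path_val f (del_at j p) + f (p ! j)"
proof -
  assume "j < length p"
  then have "p = take j p @ p ! j # drop (Suc j) p" by (simp add: id_take_nth_drop)
  then have "path_val f p = path_val f (take j p @ p ! j # drop (Suc j) p)" by simp
  then show ?thesis by (simp add: path_val_def del_at_def)
qed

lemma path_val_subseq_le:
  "subseq a b \<Longrightarrow> (\<And>x. x \<in> set b \<Longrightarrow> 0 \<le> f x) \<Longrightarrow> path_val f a \<le> path_val f b"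
  by (induction rule: list_emb.induct) (auto simp: path_val_def intro!: sum_list_nonneg add_increasing)

lemma successively_double_insertion:
  assumes "successively P (A @ u # B @ C)" and "successively P (A @ B @ u # C)" and "B \<noteq> []"
  shows "successively P (A @ u # B @ u # C)"
  using assms by (auto simp: successively_append_iff successively_Cons hd_append)

lemma allowed_path_double_insertion:
  assumes "j < j'" and "j' \<le> length p"
    and "allowed_path V E (Suc n) (ins_at j u p)" and "allowed_path V E (Suc n) (ins_at j' u p)"
  shows "allowed_path V E (Suc (Suc n)) (ins_at j u (ins_at j' u p))"
proof -
  define A where "A = take j p"
  define B where "B = take (j' - j) (drop j p)"
  define C where "C = drop j' p"
  have "B @ C = drop j p"
    using assms(1) unfolding B_def C_def by (metis append_take_drop_id drop_drop le_add_diff_inverse2 less_imp_le)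
  then have p: "p = A @ B @ C" unfolding A_def by simp
  have "length A = j" "B \<noteq> []" using assms(1,2) unfolding A_def B_def by auto
  have ins_j: "ins_at j u p = A @ u # B @ C"
    unfolding ins_at_def A_def \<open>B @ C = drop j p\<close> ..
  have "take j' p = A @ B"
    using assms(1) unfolding A_def B_def by (metis le_add_diff_inverse less_imp_le take_add)
  then have ins_j': "ins_at j' u p = A @ B @ u # C" by (simp add: ins_at_def C_def)
  have ins_both: "ins_at j u (ins_at j' u p) = A @ u # B @ u # C"
    unfolding ins_j' using \<open>length A = j\<close> by (simp add: ins_at_def)
  from assms(3,4) have "length (A @ u # B @ C) = Suc (Suc n)" "set (A @ u # B @ C) \<subseteq> V"
    "successively (\<lambda>x y. (x, y) \<in> E) (A @ u # B @ C)"
    "successively (\<lambda>x y. (x, y) \<in> E) (A @ B @ u # C)"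
    unfolding allowed_path_iff_successively ins_j ins_j' by auto
  then show ?thesis
    unfolding allowed_path_iff_successively ins_both
    using successively_double_insertion[OF _ _ \<open>B \<noteq> []\<close>] by auto
qed

lemma discrete_morse_nonneg: "discrete_morse V E f \<Longrightarrow> v \<in> V \<Longrightarrow> 0 \<le> f v"
  unfolding discrete_morse_def by blast

lemma discrete_morse_zero_deletion_unique:
  assumes "discrete_morse V E f" and "allowed_path V E (Suc n) p"
    and "i \<le> Suc n" "f (p ! i) = 0" "allowed_path V E n (del_at i p)"
    and "i' \<le> Suc n" "f (p ! i') = 0" "allowed_path V E n (del_at i' p)"
  shows "i = i'"
  using assms unfolding discrete_morse_def by (metis diff_Suc_1 le_add1 plus_1_eq_Suc)

lemma discrete_morse_zero_insertion_unique:
  assumes "discrete_morse V E f" and "allowed_path V E n p"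
    and "f u = 0" "j \<le> Suc n" "allowed_path V E (Suc n) (ins_at j u p)"
    and "f u' = 0" "j' \<le> Suc n" "allowed_path V E (Suc n) (ins_at j' u' p)"
  shows "u = u'"
  using assms unfolding discrete_morse_def by blast

lemma discrete_morse_zero_insertion_position_unique:
  assumes morse: "discrete_morse V E f" and p: "allowed_path V E n p" and "f u = 0"
    and "j \<le> Suc n" "allowed_path V E (Suc n) (ins_at j u p)"
    and "j' \<le> Suc n" "allowed_path V E (Suc n) (ins_at j' u p)"
  shows "j = j'"
proof -
  have len: "length p = Suc n" using p by (simp add: allowed_path_def)
  have False if "i < i'" "i' \<le> Suc n"
    and ins_i: "allowed_path V E (Suc n) (ins_at i u p)"
    and ins_i': "allowed_path V E (Suc n) (ins_at i' u p)" for i i'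
  proof -
    let ?g = "ins_at i u (ins_at i' u p)"
    have swap: "?g = ins_at (Suc i') u (ins_at i u p)"
      using that(1,2) len by (simp add: ins_at_ins_at_swap)
    have g: "allowed_path V E (Suc (Suc n)) ?g"
      using allowed_path_double_insertion[OF that(1) _ ins_i ins_i'] that(2) len by simp
    have "i = Suc i'"
    proof (rule discrete_morse_zero_deletion_unique[OF morse g])
      show "f (?g ! i) = 0" "allowed_path V E (Suc n) (del_at i ?g)"
        using that \<open>f u = 0\<close> ins_i' len by (simp_all add: nth_ins_at del_at_ins_at)
      show "f (?g ! Suc i') = 0" "allowed_path V E (Suc n) (del_at (Suc i') ?g)"
        unfolding swap using that \<open>f u = 0\<close> ins_i len
        by (simp_all add: nth_ins_at del_at_ins_at)
    qed (use that in simp_all)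
    with \<open>i < i'\<close> show False by simp
  qed
  with assms(4-7) show ?thesis by (metis linorder_neqE_nat)
qed

lemma morse_pairsE:
  assumes "(a, b) \<in> morse_pairs V E f"
  obtains n j where "allowed_path V E n a" and "allowed_path V E (Suc n) b"
    and "j \<le> Suc n" and "a = del_at j b" and "f (b ! j) = 0"
proof -
  from assms obtain n where a: "allowed_path V E n a" and b: "allowed_path V E (Suc n) b"
    and "subseq a b" and val: "path_val f a = path_val f b"
    unfolding morse_pairs_def by blast
  moreover have "length b = Suc (length a)" using a b by (simp add: allowed_path_def)
  ultimately obtain j where "j < length b" "a = del_at j b"
    using subseq_length_Suc_obtains_del_at by metis
  moreover from this have "f (b ! j) = 0" using val path_val_del_at[of j b f] by simp
  moreover have "j \<le> Suc n" using \<open>j < length b\<close> b by (simp add: allowed_path_def)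
  ultimately show thesis using that a b by blast
qed

lemma morse_pairs_unique_face:
  assumes morse: "discrete_morse V E f"
    and "(a, b) \<in> morse_pairs V E f" and "(a', b) \<in> morse_pairs V E f"
  shows "a = a'"
proof -
  obtain n j where a: "allowed_path V E n a" and b: "allowed_path V E (Suc n) b"
    and j: "j \<le> Suc n" and a_eq: "a = del_at j b" and fj: "f (b ! j) = 0"
    using assms(2) by (rule morse_pairsE)
  obtain n' j' where a': "allowed_path V E n' a'" and b_n': "allowed_path V E (Suc n') b"
    and j': "j' \<le> Suc n'" and a'_eq: "a' = del_at j' b" and fj': "f (b ! j') = 0"
    using assms(3) by (rule morse_pairsE)
  have "n' = n" using b b_n' by (simp add: allowed_path_def)
  then have "j = j'"
    using discrete_morse_zero_deletion_unique[OF morse b j fj _ _ fj'] a a' j' a_eq a'_eq by simp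
  with a_eq a'_eq show ?thesis by simp
qed

lemma morse_pairs_unique_coface:
  assumes morse: "discrete_morse V E f"
    and "(a, b) \<in> morse_pairs V E f" and "(a, b') \<in> morse_pairs V E f"
  shows "b = b'"
proof -
  obtain n j where a: "allowed_path V E n a" and b: "allowed_path V E (Suc n) b"
    and j: "j \<le> Suc n" and "a = del_at j b" and fj: "f (b ! j) = 0"
    using assms(2) by (rule morse_pairsE)
  then have b_eq: "b = ins_at j (b ! j) a" by (simp add: ins_at_nth_del_at allowed_path_def)
  obtain n' j' where a_n': "allowed_path V E n' a" and b': "allowed_path V E (Suc n') b'"
    and j': "j' \<le> Suc n'" and "a = del_at j' b'" and fj': "f (b' ! j') = 0"
    using assms(3) by (rule morse_pairsE)
  then have b'_eq: "b' = ins_at j' (b' ! j') a" by (simp add: ins_at_nth_del_at allowed_path_def)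
  have "n' = n" using a a_n' by (simp add: allowed_path_def)
  have u: "b ! j = b' ! j'"
    using discrete_morse_zero_insertion_unique[OF morse a fj j _ fj'] j' b b' b_eq b'_eq \<open>n' = n\<close>
    by simp
  have "j = j'"
    using discrete_morse_zero_insertion_position_unique[OF morse a fj j] j' b b' b_eq b'_eq u \<open>n' = n\<close>
    by simp
  with b_eq b'_eq u show ?thesis by simp
qed

lemma cyclic_descent:
  fixes g :: "nat \<Rightarrow> 'a :: preorder"
  assumes step: "\<And>i. i < k \<Longrightarrow> g (Suc i mod k) \<le> g i" and "j < k"
  shows "g ((j + m) mod k) \<le> g j"
proof (induction m)
  case 0
  with \<open>j < k\<close> show ?case by simp
next
  case (Suc m)
  have "g ((j + Suc m) mod k) = g (Suc ((j + m) mod k) mod k)" by (simp add: mod_Suc_eq)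
  also have "\<dots> \<le> g ((j + m) mod k)" using \<open>j < k\<close> by (intro step) simp
  finally show ?case using Suc.IH by (rule order_trans)
qed

lemma discrete_morse_no_cycle:
  assumes morse: "discrete_morse V E f" and "k \<ge> 2" and inj: "inj_on \<beta> {..<k}"
    and cycle: "\<And>i. i < k \<Longrightarrow> allowed_path V E n (\<alpha> i) \<and> allowed_path V E (Suc n) (\<beta> i) \<and>
                   (\<alpha> i, \<beta> i) \<in> morse_pairs V E f \<and>
                   subseq (\<alpha> (Suc i mod k)) (\<beta> i)"
  shows False
proof -
  have k: "0 < k" "1 < k" "Suc 0 mod k = 1" using \<open>k \<ge> 2\<close> by auto
  have val_eq: "path_val f (\<alpha> i) = path_val f (\<beta> i)" if "i < k" for i
    using cycle[OF that] unfolding morse_pairs_def by blast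
  have descent: "path_val f (\<alpha> (Suc i mod k)) \<le> path_val f (\<alpha> i)" if "i < k" for i
  proof -
    have "path_val f (\<alpha> (Suc i mod k)) \<le> path_val f (\<beta> i)"
      using cycle[OF that] discrete_morse_nonneg[OF morse]
      by (intro path_val_subseq_le) (auto simp: allowed_path_def)
    with val_eq[OF that] show ?thesis by simp
  qed
  have "path_val f (\<alpha> 0) \<le> path_val f (\<alpha> 1)"
    using cyclic_descent[where g = "\<lambda>i. path_val f (\<alpha> i)", OF descent, of 1 "k - 1"] k by simp
  then have "path_val f (\<alpha> 1) = path_val f (\<beta> 0)"
    using descent[OF k(1)] val_eq[OF k(1)] k(3) by simp
  then have "(\<alpha> 1, \<beta> 0) \<in> morse_pairs V E f"
    using cycle[OF k(1)] cycle[OF k(2)] k(3) unfolding morse_pairs_def by (auto simp: allowed_path_def)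
  then have "\<alpha> 1 = \<alpha> 0"
    using morse_pairs_unique_face[OF morse] cycle[OF k(1)] by blast
  then have "\<beta> 1 = \<beta> 0"
    using morse_pairs_unique_coface[OF morse] cycle[OF k(1)] cycle[OF k(2)] by metis
  with inj k show False by (auto dest: inj_onD)
qed

theorem lemma5p2:
  fixes V :: "'v set" and E :: "('v \<times> 'v) set" and f :: "'v \<Rightarrow> real"
  assumes "digraph V E" and "discrete_morse V E f"
  shows "\<not> (\<exists>k n (\<alpha> :: nat \<Rightarrow> 'v list) (\<beta> :: nat \<Rightarrow> 'v list).
            k \<ge> 2 \<and> inj_on \<beta> {..<k} \<and>
            (\<forall>i<k. allowed_path V E n (\<alpha> i) \<and> allowed_path V E (Suc n) (\<beta> i) \<and>
                   (\<alpha> i, \<beta> i) \<in> morse_pairs V E f \<and>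
                   subseq (\<alpha> ((i + 1) mod k)) (\<beta> i) \<and> \<alpha> ((i + 1) mod k) \<noteq> \<beta> i))"
  using discrete_morse_no_cycle[OF assms(2)] by fastforce

end
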